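(* Let $G$ be a finite connected graph (loops and multiple edges allowed) with $n$ vertices, maximal degree $d$, and girth $g$. Then \[ \mathrm{kiss}(G) \leq \frac{n d (d-1)^{\lfloor g/2 \rfloor}}{g}, \] with equality if and only if $G$ is a Moore graph.
   Context: A walk is a finite sequence of oriented edges in which the initial vertex of each edge after the first equals the terminal vertex of the previous one; it is closed if it starts and ends at the same vertex, and closed walks are considered up to cyclic permutation of their edges. A walk is geodesic if it never traverses an edge and immediately traverses the same edge back in the opposite direction; a closed geodesic is a closed walk that is locally geodesic (including at the base point). A cycle is a closed walk in which each vertex is the initial vertex of at most one edge of the walk. The girth of $G$ is the smallest length of a closed geodesic in $G$ (a shortest closed geodesic is a cycle). The kissing number $\mathrm{kiss}(G)$ is the number of distinct shortest oriented cycles in $G$ (oriented cycles of length equal to the girth). A Moore graph is a connected $d$-regular graph of girth $g$ whose number of vertices equals the Moore bound, namely $1 + d \sum_{j=0}^{(g-3)/2} (d-1)^j$ if $g$ is odd and $2 \sum_{j=0}^{(g-2)/2} (d-1)^j$ if $g$ is even. *)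

theory Defs
  imports Complex_Main
begin

text \<open>A finite graph with loops and multiple edges, in Serre's formalism:
  V is the vertex set, D the set of oriented edges (darts), rv the orientation
  reversal (a fixed-point-free involution of D) and org the initial vertex. Every undirected edge
  (including a loop) gives exactly two oriented edges.\<close>

definition multigraph :: "'v set \<Rightarrow> 'd set \<Rightarrow> ('d \<Rightarrow> 'd) \<Rightarrow> ('d \<Rightarrow> 'v) \<Rightarrow> bool" where
  "multigraph V D rv org \<longleftrightarrow> finite V \<and> finite D \<and>
     (\<forall>e\<in>D. rv e \<in> D \<and> rv e \<noteq> e \<and> rv (rv e) = e \<and> org e \<in> V)"

definition trm :: "('d \<Rightarrow> 'd) \<Rightarrow> ('d \<Rightarrow> 'v) \<Rightarrow> 'd \<Rightarrow> 'v" where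
  "trm rv org e = org (rv e)"

definition degree :: "'d set \<Rightarrow> ('d \<Rightarrow> 'v) \<Rightarrow> 'v \<Rightarrow> nat" where
  "degree D org v = card {e\<in>D. org e = v}"

definition max_degree :: "'v set \<Rightarrow> 'd set \<Rightarrow> ('d \<Rightarrow> 'v) \<Rightarrow> nat" where
  "max_degree V D org = Max (degree D org ` V)"

definition is_walk :: "'d set \<Rightarrow> ('d \<Rightarrow> 'd) \<Rightarrow> ('d \<Rightarrow> 'v) \<Rightarrow> 'd list \<Rightarrow> bool" where
  "is_walk D rv org ws \<longleftrightarrow> set ws \<subseteq> D \<and>
     (\<forall>i. Suc i < length ws \<longrightarrow> org (ws ! Suc i) = trm rv org (ws ! i))"

definition closed_walk :: "'d set \<Rightarrow> ('d \<Rightarrow> 'd) \<Rightarrow> ('d \<Rightarrow> 'v) \<Rightarrow> 'd list \<Rightarrow> bool" where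
  "closed_walk D rv org ws \<longleftrightarrow> ws \<noteq> [] \<and> is_walk D rv org ws \<and>
     org (hd ws) = trm rv org (last ws)"

definition closed_geodesic :: "'d set \<Rightarrow> ('d \<Rightarrow> 'd) \<Rightarrow> ('d \<Rightarrow> 'v) \<Rightarrow> 'd list \<Rightarrow> bool" where
  "closed_geodesic D rv org ws \<longleftrightarrow> closed_walk D rv org ws \<and>
     (\<forall>i<length ws. ws ! (Suc i mod length ws) \<noteq> rv (ws ! i))"

definition is_cycle :: "'d set \<Rightarrow> ('d \<Rightarrow> 'd) \<Rightarrow> ('d \<Rightarrow> 'v) \<Rightarrow> 'd list \<Rightarrow> bool" where
  "is_cycle D rv org ws \<longleftrightarrow> closed_walk D rv org ws \<and> distinct (map org ws)"

definition girth :: "'d set \<Rightarrow> ('d \<Rightarrow> 'd) \<Rightarrow> ('d \<Rightarrow> 'v) \<Rightarrow> nat" where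
  "girth D rv org = (LEAST n. \<exists>ws. closed_geodesic D rv org ws \<and> length ws = n)"

definition rot_class :: "'d list \<Rightarrow> 'd list set" where
  "rot_class ws = {rotate k ws | k. True}"

definition kiss :: "'d set \<Rightarrow> ('d \<Rightarrow> 'd) \<Rightarrow> ('d \<Rightarrow> 'v) \<Rightarrow> nat" where
  "kiss D rv org = card (rot_class `
     {ws. is_cycle D rv org ws \<and> closed_geodesic D rv org ws \<and> length ws = girth D rv org})"

definition graph_connected :: "'v set \<Rightarrow> 'd set \<Rightarrow> ('d \<Rightarrow> 'd) \<Rightarrow> ('d \<Rightarrow> 'v) \<Rightarrow> bool" where
  "graph_connected V D rv org \<longleftrightarrow> V \<noteq> {} \<and> (\<forall>u\<in>V. \<forall>v\<in>V. u = v \<or>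
     (\<exists>ws. ws \<noteq> [] \<and> is_walk D rv org ws \<and> org (hd ws) = u \<and> trm rv org (last ws) = v))"

text \<open>Moore bound; the sums run over j = 0 .. (g-3)/2 resp. j = 0 .. (g-2)/2.\<close>
definition moore_bound :: "nat \<Rightarrow> nat \<Rightarrow> nat" where
  "moore_bound d g = (if odd g then 1 + d * (\<Sum>j<(g - 1) div 2. (d - 1) ^ j)
                      else 2 * (\<Sum>j<g div 2. (d - 1) ^ j))"

definition moore_graph :: "'v set \<Rightarrow> 'd set \<Rightarrow> ('d \<Rightarrow> 'd) \<Rightarrow> ('d \<Rightarrow> 'v) \<Rightarrow> bool" where
  "moore_graph V D rv org \<longleftrightarrow> graph_connected V D rv org \<and>
     (\<exists>d. (\<forall>v\<in>V. degree D org v = d) \<and> card V = moore_bound d (girth D rv org))"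

end

theory Submission
  imports Defs
begin

(*
  Every shortest closed geodesic is a cycle, so gir * kiss counts the shortest closed geodesics
  with a base point, i.e. as lists of darts. Let r = gir div 2. Such a geodesic is determined by
  its first r + 1 darts: two different completions would be two distinct non-backtracking paths
  between the same vertices of total length less than gir, and stripping their common end they
  would close up to a closed geodesic shorter than gir. The first r + 1 darts form a
  non-backtracking walk, and at most (d - 1)^r such walks start with a given dart, whence
  gir * kiss <= |D| (d - 1)^r <= n d (d - 1)^r.

  Equality forces G to be d-regular and every non-backtracking walk of length r + 1 to be the
  beginning of a shortest closed geodesic. Consider the non-backtracking walks of length at most
  r starting at a vertex (gir odd), or leaving an edge in either direction (gir even): they end
  at pairwise distinct vertices, and their number is the Moore bound. Under the extension
  property their endpoints form a set closed under taking neighbours, hence all of V by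
  connectivity. Conversely, if they reach every vertex, the one ending where a given walk of
  length r + 1 ends closes that walk up to a shortest closed geodesic.
*)

lemma all_Suc_less_Cons:
  "(\<forall>i. Suc i < length (x # xs) \<longrightarrow> P i) \<longleftrightarrow>
     (xs \<noteq> [] \<longrightarrow> P 0) \<and> (\<forall>i. Suc i < length xs \<longrightarrow> P (Suc i))"
  by (cases xs) (auto simp: less_Suc_eq_0_disj)

lemma sum_eq_card_mult_iff:
  fixes f :: "'a \<Rightarrow> nat"
  assumes "finite I" "\<And>i. i \<in> I \<Longrightarrow> f i \<le> c"
  shows "sum f I = card I * c \<longleftrightarrow> (\<forall>i\<in>I. f i = c)"
  using sum_mono_inv[of f I "\<lambda>_. c"] assms by auto

lemma rot_class_rotate: "rot_class (rotate i w) = rot_class w"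
proof
  show "rot_class (rotate i w) \<subseteq> rot_class w"
    unfolding rot_class_def by (auto simp: rotate_rotate)
  show "rot_class w \<subseteq> rot_class (rotate i w)"
  proof
    fix u assume "u \<in> rot_class w"
    then obtain k where u: "u = rotate k w" unfolding rot_class_def by auto
    show "u \<in> rot_class (rotate i w)"
    proof (cases "w = []")
      case False
      then have "i \<le> length w * i" by (simp add: Suc_le_eq)
      then have "rotate (k + length w * i - i) (rotate i w) = rotate (k + length w * i) w"
        by (simp only: rotate_rotate le_add_diff_inverse2 trans_le_add2)
      also have "\<dots> = u" unfolding u by (metis mod_mult_self2 rotate_conv_mod)
      finally show ?thesis unfolding rot_class_def by blast
    qed (simp add: u rot_class_def)
  qed
qed

lemma card_rot_class:
  assumes "w \<noteq> []" and "distinct w" shows "card (rot_class w) = length w"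
proof -
  have "rot_class w = (\<lambda>k. rotate k w) ` {..<length w}"
  proof
    show "rot_class w \<subseteq> (\<lambda>k. rotate k w) ` {..<length w}"
    proof
      fix u assume "u \<in> rot_class w"
      then obtain k where "u = rotate (k mod length w) w"
        unfolding rot_class_def by (auto simp: rotate_conv_mod[symmetric])
      moreover have "k mod length w < length w" using assms(1) by simp
      ultimately show "u \<in> (\<lambda>k. rotate k w) ` {..<length w}" by blast
    qed
  qed (auto simp: rot_class_def)
  moreover have "inj_on (\<lambda>k. rotate k w) {..<length w}"
  proof (rule inj_onI)
    fix i j assume "i \<in> {..<length w}" "j \<in> {..<length w}" "rotate i w = rotate j w"
    then have "w ! i = w ! j" using assms(1) by (metis hd_rotate_conv_nth lessThan_iff mod_less)
    then show "i = j" using assms(2) \<open>i \<in> _\<close> \<open>j \<in> _\<close> by (simp add: nth_eq_iff_index_eq)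
  qed
  ultimately show ?thesis by (simp add: card_image)
qed

lemma card_rot_classes:
  assumes "finite S" and rotate_closed: "\<And>w k. w \<in> S \<Longrightarrow> rotate k w \<in> S"
    and "\<And>w. w \<in> S \<Longrightarrow> w \<noteq> [] \<and> distinct w \<and> length w = n"
  shows "n * card (rot_class ` S) = card S"
proof -
  have union: "\<Union> (rot_class ` S) = S"
    unfolding rot_class_def using rotate_closed by (auto intro!: bexI exI[of _ 0])
  have "n * card (rot_class ` S) = card (\<Union> (rot_class ` S))"
  proof (rule card_partition)
    show "c1 \<inter> c2 = {}" if "c1 \<in> rot_class ` S" "c2 \<in> rot_class ` S" "c1 \<noteq> c2" for c1 c2
    proof -
      have "c = rot_class u" if c: "c \<in> rot_class ` S" and u: "u \<in> c" for c u
      proof -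
        obtain w k where "c = rot_class w" "u = rotate k w"
          using c u unfolding rot_class_def by blast
        then show ?thesis by (simp add: rot_class_rotate)
      qed
      then show ?thesis using \<open>c1 \<noteq> c2\<close> that(1,2) by blast
    qed
    show "card c = n" if "c \<in> rot_class ` S" for c
      using that assms(3) card_rot_class by fastforce
  qed (use assms(1) union in auto)
  then show ?thesis using union by simp
qed

section \<open>Non-backtracking walks and the girth\<close>

locale serre_graph =
  fixes V :: "'v set" and D :: "'d set" and rv :: "'d \<Rightarrow> 'd" and org :: "'d \<Rightarrow> 'v"
  assumes multigraph: "multigraph V D rv org"
begin

lemma finite_V: "finite V" and finite_D: "finite D"
  using multigraph unfolding multigraph_def by auto

lemma rv_in_D: "e \<in> D \<Longrightarrow> rv e \<in> D" and rv_neq: "e \<in> D \<Longrightarrow> rv e \<noteq> e"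
  and rv_rv: "e \<in> D \<Longrightarrow> rv (rv e) = e" and org_in_V: "e \<in> D \<Longrightarrow> org e \<in> V"
  using multigraph unfolding multigraph_def by auto

abbreviation tgt :: "'d \<Rightarrow> 'v" where "tgt e \<equiv> org (rv e)"

fun nb_walk :: "'d list \<Rightarrow> bool" where
  "nb_walk [] \<longleftrightarrow> True"
| "nb_walk [e] \<longleftrightarrow> e \<in> D"
| "nb_walk (e # f # p) \<longleftrightarrow> e \<in> D \<and> org f = tgt e \<and> f \<noteq> rv e \<and> nb_walk (f # p)"

lemma nb_walk_Cons:
  "nb_walk (e # p) \<longleftrightarrow> e \<in> D \<and> nb_walk p \<and> (p \<noteq> [] \<longrightarrow> org (hd p) = tgt e \<and> hd p \<noteq> rv e)"
  by (cases p) auto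

lemma nb_walk_append:
  "nb_walk (p @ q) \<longleftrightarrow> nb_walk p \<and> nb_walk q \<and>
     (p \<noteq> [] \<and> q \<noteq> [] \<longrightarrow> org (hd q) = tgt (last p) \<and> hd q \<noteq> rv (last p))"
  by (induction p rule: nb_walk.induct) (auto simp: nb_walk_Cons)

lemma nb_walk_subset: "nb_walk p \<Longrightarrow> set p \<subseteq> D"
  by (induction p rule: nb_walk.induct) auto

lemma nb_walk_reverse: "nb_walk p \<Longrightarrow> nb_walk (rev (map rv p))"
proof (induction p)
  case (Cons e p)
  then show ?case
    by (cases p)
      (auto simp: nb_walk_Cons nb_walk_append rv_in_D rv_rv last_rev hd_map last_map hd_rev)
qed simp

lemma nb_walk_iff:
  "nb_walk p \<longleftrightarrow> is_walk D rv org p \<and> (\<forall>i. Suc i < length p \<longrightarrow> p ! Suc i \<noteq> rv (p ! i))"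
proof (induction p)
  case (Cons e p)
  then show ?case
    unfolding nb_walk_Cons is_walk_def trm_def all_Suc_less_Cons by (auto simp: hd_conv_nth)
qed (simp add: is_walk_def)

lemma is_walk_Cons:
  "is_walk D rv org (e # p) \<longleftrightarrow> e \<in> D \<and> is_walk D rv org p \<and> (p \<noteq> [] \<longrightarrow> org (hd p) = tgt e)"
  unfolding is_walk_def trm_def all_Suc_less_Cons by (auto simp: hd_conv_nth)

definition closed_nb_walk :: "'d list \<Rightarrow> bool" where
  "closed_nb_walk p \<longleftrightarrow> p \<noteq> [] \<and> nb_walk p \<and> org (hd p) = tgt (last p)"

lemma closed_geodesic_iff: "closed_geodesic D rv org p \<longleftrightarrow> closed_nb_walk p \<and> hd p \<noteq> rv (last p)"
proof (cases "p = []")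
  case False
  have "(\<forall>i<length p. P i) \<longleftrightarrow> (\<forall>i. Suc i < length p \<longrightarrow> P i) \<and> P (length p - 1)" for P
    using False
      by (metis Suc_pred' diff_less length_greater_0_conv less_Suc_eq less_one not_less_eq)
  moreover have "p ! (Suc (length p - 1) mod length p) = hd p"
    using False by (simp add: hd_conv_nth)
  ultimately show ?thesis
    unfolding closed_geodesic_def closed_walk_def closed_nb_walk_def nb_walk_iff trm_def
    using False by (auto simp: last_conv_nth)
qed (simp add: closed_geodesic_def closed_walk_def closed_nb_walk_def)

lemma closed_geodesic_rotate1:
  assumes "closed_geodesic D rv org w" shows "closed_geodesic D rv org (rotate1 w)"
proof (cases w)
  case (Cons e p)
  show ?thesis
  proof (cases "p = []")
    case False
    then show ?thesis using assms unfolding Cons closed_geodesic_iff closed_nb_walk_def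
      by (auto simp: nb_walk_Cons nb_walk_append)
  qed (use assms Cons in simp)
qed (use assms in simp)

lemma closed_geodesic_rotate: "closed_geodesic D rv org w \<Longrightarrow> closed_geodesic D rv org (rotate k w)"
  by (induction k) (simp_all add: closed_geodesic_rotate1)

abbreviation gir :: nat where "gir \<equiv> girth D rv org"

abbreviation rad :: nat where "rad \<equiv> gir div 2"

lemma girth_le: "closed_geodesic D rv org p \<Longrightarrow> gir \<le> length p"
  unfolding girth_def by (rule Least_le) auto

lemma closed_nb_walk_remove_backtrack:
  assumes "closed_nb_walk w" "hd w = rv (last w)"
  shows "\<exists>m. closed_nb_walk m \<and> length m + 2 = length w"
proof -
  obtain a w' where w: "w = a # w'" using assms(1) unfolding closed_nb_walk_def by (cases w) auto
  have nb: "nb_walk w" using assms(1) unfolding closed_nb_walk_def by simp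
  have "a \<in> D" using nb w by (simp add: nb_walk_Cons)
  then have "w' \<noteq> []" using assms(2) w rv_neq by force
  then obtain m b where w': "w' = m @ [b]" by (metis rev_exhaust)
  have "b \<in> D" using nb_walk_subset[OF nb] w w' by auto
  then have ba: "b = rv a" using assms(2) w w' rv_rv by auto
  have "m \<noteq> []"
    using assms(1) w w' ba unfolding closed_nb_walk_def by (auto simp: nb_walk_Cons)
  then have "closed_nb_walk m"
    using nb ba unfolding w w' closed_nb_walk_def by (auto simp: nb_walk_Cons nb_walk_append)
  then show ?thesis using w w' by auto
qed

lemma girth_le_closed_nb_walk: "closed_nb_walk w \<Longrightarrow> gir \<le> length w"
proof (induction "length w" arbitrary: w rule: less_induct)
  case less
  show ?case
  proof (cases "hd w = rv (last w)")
    case True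
    then obtain m where "closed_nb_walk m" "length m + 2 = length w"
      using closed_nb_walk_remove_backtrack less.prems by blast
    then show ?thesis using less.hyps[of m] by auto
  qed (use less.prems girth_le closed_geodesic_iff in auto)
qed

lemma closed_nb_walk_girth_imp_closed_geodesic:
  "closed_nb_walk w \<Longrightarrow> length w = gir \<Longrightarrow> closed_geodesic D rv org w"
  using closed_nb_walk_remove_backtrack girth_le_closed_nb_walk closed_geodesic_iff by fastforce

definition walk_end :: "'v \<Rightarrow> 'd list \<Rightarrow> 'v" where
  "walk_end x p = (if p = [] then x else tgt (last p))"

definition nb_path :: "'v \<Rightarrow> 'd list \<Rightarrow> 'v \<Rightarrow> bool" where
  "nb_path x p y \<longleftrightarrow> nb_walk p \<and> (p \<noteq> [] \<longrightarrow> org (hd p) = x) \<and> walk_end x p = y"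

lemma nb_path_Cons: "nb_walk (e # p) \<Longrightarrow> nb_path (org e) (e # p) (tgt (last (e # p)))"
  unfolding nb_path_def walk_end_def by simp

lemma nb_path_butlast: "nb_path x (p @ [e]) y \<Longrightarrow> nb_path x p (org e)"
  unfolding nb_path_def walk_end_def by (cases "p = []") (auto simp: nb_walk_append)

lemma nb_path_reverse: "nb_path x p y \<Longrightarrow> nb_path y (rev (map rv p)) x"
proof (cases "p = []")
  case False
  assume path: "nb_path x p y"
  then have "hd p \<in> D" using False nb_walk_subset hd_in_set unfolding nb_path_def by blast
  then show ?thesis using path False
    by (auto simp: nb_path_def walk_end_def nb_walk_reverse hd_rev last_rev hd_map last_map rv_rv)
qed (simp add: nb_path_def walk_end_def)

lemma nb_path_snoc:
  assumes "nb_path x q y" "f \<in> D" "org f = y" "q \<noteq> [] \<longrightarrow> f \<noteq> rv (last q)"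
  shows "nb_path x (q @ [f]) (tgt f)"
  using assms unfolding nb_path_def walk_end_def by (cases "q = []") (auto simp: nb_walk_append)

lemma nb_path_ConsI:
  assumes "nb_path (tgt e) s y" "e \<in> D" "s \<noteq> [] \<longrightarrow> hd s \<noteq> rv e"
  shows "nb_path (org e) (e # s) y"
  using assms unfolding nb_path_def walk_end_def by (auto simp: nb_walk_Cons)

lemma nb_path_tl: "nb_walk (e # p) \<Longrightarrow> nb_path (tgt e) p (tgt (last (e # p)))"
  unfolding nb_path_def walk_end_def by (auto simp: nb_walk_Cons)

lemma closed_nb_walk_join:
  assumes "nb_path x a y" "nb_path x b y" "a \<noteq> [] \<or> b \<noteq> []"
    and "a \<noteq> [] \<and> b \<noteq> [] \<longrightarrow> last a \<noteq> last b"
  shows "closed_nb_walk (a @ rev (map rv b))"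
proof -
  have rb: "nb_path y (rev (map rv b)) x" using nb_path_reverse assms(2) .
  have "rv (last b) \<noteq> rv (last a)" if "a \<noteq> []" "b \<noteq> []"
    using that assms nb_walk_subset unfolding nb_path_def by (metis last_in_set rv_rv subsetD)
  then have "nb_walk (a @ rev (map rv b))"
    unfolding nb_walk_append using assms rb by (auto simp: nb_path_def walk_end_def hd_rev last_map)
  moreover have "org (hd (a @ rev (map rv b))) = tgt (last (a @ rev (map rv b)))"
    using assms rb by (cases "a = []"; cases "b = []")
      (auto simp: nb_path_def walk_end_def hd_rev last_rev hd_append)
  ultimately show ?thesis using assms(3) unfolding closed_nb_walk_def by auto
qed

text \<open>Two distinct non-backtracking paths with the same ends, stripped of their common final
  segment, close up to a closed non-backtracking walk.\<close>

lemma girth_le_two_paths: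
  "nb_path x p y \<Longrightarrow> nb_path x q y \<Longrightarrow> p \<noteq> q \<Longrightarrow> gir \<le> length p + length q"
proof (induction "length p + length q" arbitrary: p q y rule: less_induct)
  case less
  show ?case
  proof (cases "p \<noteq> [] \<and> q \<noteq> [] \<and> last p = last q")
    case True
    then obtain p' q' e where p: "p = p' @ [e]" and q: "q = q' @ [e]"
      by (metis append_butlast_last_id)
    have "nb_path x p' (org e)" "nb_path x q' (org e)" "p' \<noteq> q'"
      using nb_path_butlast less.prems p q by auto
    then show ?thesis using less.hyps[of p' q' "org e"] p q by auto
  next
    case False
    then have "closed_nb_walk (p @ rev (map rv q))" using closed_nb_walk_join less.prems by blast
    then show ?thesis using girth_le_closed_nb_walk by fastforce
  qed
qed

lemma nb_paths_eq:
  "nb_path x p y \<Longrightarrow> nb_path x q y \<Longrightarrow> length p + length q < gir \<Longrightarrow> p = q"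
  using girth_le_two_paths by fastforce

lemma closed_geodesic_join:
  assumes "nb_path x a y" "nb_path x b y" "a \<noteq> b" "length a + length b = gir"
  shows "closed_geodesic D rv org (a @ rev (map rv b))"
proof -
  have "\<not> (a \<noteq> [] \<and> b \<noteq> [] \<and> last a = last b)"
  proof
    assume "a \<noteq> [] \<and> b \<noteq> [] \<and> last a = last b"
    then obtain a' b' e where a: "a = a' @ [e]" and b: "b = b' @ [e]"
      by (metis append_butlast_last_id)
    have "nb_path x a' (org e)" "nb_path x b' (org e)" "a' \<noteq> b'"
      using nb_path_butlast assms a b by auto
    then have "gir \<le> length a' + length b'" by (rule girth_le_two_paths)
    then show False using assms(4) a b by simp
  qed
  then have "closed_nb_walk (a @ rev (map rv b))" using closed_nb_walk_join assms by blast
  then show ?thesis using closed_nb_walk_girth_imp_closed_geodesic assms(4) by simp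
qed

lemma shortest_geodesic_distinct_vertices:
  assumes "closed_geodesic D rv org w" "length w = gir" shows "distinct (map org w)"
proof (rule ccontr)
  assume "\<not> distinct (map org w)"
  then obtain xs y ys zs where "map org w = xs @ (y # ys) @ (y # zs)"
    using not_distinct_decomp by fastforce
  then obtain u v where u: "w = u @ v" and v: "map org v = (y # ys) @ (y # zs)"
    by (metis map_eq_append_conv)
  from v obtain s t where "v = s @ t" and s: "map org s = y # ys" and t: "map org t = y # zs"
    by (metis map_eq_append_conv)
  with u have w: "w = u @ s @ t" by simp
  have "s \<noteq> []" "t \<noteq> []" "org (hd s) = org (hd t)" using s t by (auto simp: map_eq_Cons_conv)
  moreover have "nb_walk (s @ t)"
    using assms(1) nb_walk_append unfolding w closed_geodesic_iff closed_nb_walk_def by blast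
  ultimately have "closed_nb_walk s" unfolding closed_nb_walk_def nb_walk_append by auto
  then have "gir \<le> length s" by (rule girth_le_closed_nb_walk)
  then show False using assms(2) w \<open>t \<noteq> []\<close> by (cases t) auto
qed

definition shortest_geodesics :: "'d list set" where
  "shortest_geodesics = {w. closed_geodesic D rv org w \<and> length w = gir}"

lemma shortest_geodesic_darts: "w \<in> shortest_geodesics \<Longrightarrow> w \<noteq> [] \<and> set w \<subseteq> D"
  unfolding shortest_geodesics_def closed_geodesic_iff closed_nb_walk_def
  using nb_walk_subset by auto

lemma finite_shortest_geodesics: "finite shortest_geodesics"
proof (rule finite_subset)
  show "shortest_geodesics \<subseteq> {p. set p \<subseteq> D \<and> length p \<le> gir}"
    using shortest_geodesic_darts by (auto simp: shortest_geodesics_def)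
qed (rule finite_lists_length_le[OF finite_D])

lemma girth_mult_kiss: "gir * kiss D rv org = card shortest_geodesics"
proof -
  have "{w. is_cycle D rv org w \<and> closed_geodesic D rv org w \<and> length w = gir} = shortest_geodesics"
    using shortest_geodesic_distinct_vertices
    by (auto simp: shortest_geodesics_def is_cycle_def closed_geodesic_def)
  moreover have "gir * card (rot_class ` shortest_geodesics) = card shortest_geodesics"
    using finite_shortest_geodesics closed_geodesic_rotate shortest_geodesic_distinct_vertices
      shortest_geodesic_darts
    by (intro card_rot_classes) (auto simp: shortest_geodesics_def distinct_map)
  ultimately show ?thesis unfolding kiss_def by simp
qed

section \<open>Counting non-backtracking walks\<close>

abbreviation dmax :: nat where "dmax \<equiv> max_degree V D org"

lemma degree_le_max_degree: "v \<in> V \<Longrightarrow> degree D org v \<le> dmax"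
  unfolding max_degree_def using finite_V by simp

lemma card_D_eq_sum_degree: "card D = (\<Sum>v\<in>V. degree D org v)"
proof -
  have "D = (\<Union>v\<in>V. {e\<in>D. org e = v})" using org_in_V by auto
  then have "card D = card (\<Union>v\<in>V. {e\<in>D. org e = v})" by simp
  also have "\<dots> = (\<Sum>v\<in>V. degree D org v)"
    unfolding degree_def by (rule card_UN_disjoint) (use finite_V finite_D in auto)
  finally show ?thesis .
qed

lemma card_D_le: "card D \<le> card V * dmax"
proof -
  have "card D \<le> (\<Sum>v\<in>V. dmax)"
    unfolding card_D_eq_sum_degree using degree_le_max_degree by (rule sum_mono)
  then show ?thesis by simp
qed

definition regular :: "nat \<Rightarrow> bool" where
  "regular k \<longleftrightarrow> (\<forall>v\<in>V. degree D org v = k)"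

definition successors :: "'d \<Rightarrow> 'd set" where
  "successors e = {f\<in>D. org f = tgt e} - {rv e}"

definition nb_extensions :: "nat \<Rightarrow> 'd \<Rightarrow> 'd list set" where
  "nb_extensions m e = {p. length p = m \<and> nb_walk (e # p)}"

lemma finite_nb_extensions: "finite (nb_extensions m e)"
proof (rule finite_subset)
  show "nb_extensions m e \<subseteq> {p. set p \<subseteq> D \<and> length p \<le> m}"
    unfolding nb_extensions_def using nb_walk_subset by (fastforce simp: nb_walk_Cons)
qed (rule finite_lists_length_le[OF finite_D])

lemma card_successors: assumes "e \<in> D" shows "card (successors e) = degree D org (tgt e) - 1"
  unfolding successors_def degree_def using assms rv_in_D finite_D
    by (subst card_Diff_singleton) auto

lemma nb_extensions_0: "e \<in> D \<Longrightarrow> nb_extensions 0 e = {[]}"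
  unfolding nb_extensions_def by auto

lemma card_nb_extensions_Suc:
  assumes "e \<in> D"
  shows "card (nb_extensions (Suc m) e) = (\<Sum>f\<in>successors e. card (nb_extensions m f))"
proof -
  have "nb_extensions (Suc m) e = (\<Union>f\<in>successors e. Cons f ` nb_extensions m f)"
  proof
    show "nb_extensions (Suc m) e \<subseteq> (\<Union>f\<in>successors e. Cons f ` nb_extensions m f)"
    proof
      fix p assume "p \<in> nb_extensions (Suc m) e"
      then obtain f p' where "p = f # p'" "length p' = m" "nb_walk (e # f # p')"
        unfolding nb_extensions_def by (auto simp: length_Suc_conv)
      then show "p \<in> (\<Union>f\<in>successors e. Cons f ` nb_extensions m f)"
        unfolding nb_extensions_def successors_def by (auto simp: nb_walk_Cons)
    qed
  qed (use assms in \<open>auto simp: nb_extensions_def successors_def\<close>)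
  moreover have "card (\<Union>f\<in>successors e. Cons f ` nb_extensions m f)
      = (\<Sum>f\<in>successors e. card (Cons f ` nb_extensions m f))"
    by (rule card_UN_disjoint) (auto simp: successors_def finite_D finite_nb_extensions)
  ultimately show ?thesis by (simp add: card_image)
qed

lemma card_nb_extensions_le:
  assumes "\<forall>v\<in>V. degree D org v \<le> k" "e \<in> D" shows "card (nb_extensions m e) \<le> (k - 1) ^ m"
  using assms(2)
proof (induction m arbitrary: e)
  case (Suc m)
  have "card (nb_extensions (Suc m) e) = (\<Sum>f\<in>successors e. card (nb_extensions m f))"
    using card_nb_extensions_Suc Suc.prems .
  also have "\<dots> \<le> (\<Sum>f\<in>successors e. (k - 1) ^ m)"
    using Suc.IH by (intro sum_mono) (simp add: successors_def)
  also have "\<dots> = card (successors e) * (k - 1) ^ m" by simp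
  also have "\<dots> \<le> (k - 1) * (k - 1) ^ m"
  proof -
    have "degree D org (tgt e) \<le> k" using assms(1) org_in_V rv_in_D Suc.prems by blast
    then show ?thesis by (intro mult_le_mono1) (simp add: card_successors Suc.prems)
  qed
  finally show ?case by simp
next
  case 0
  then show ?case by (simp add: nb_extensions_0)
qed

lemma card_nb_extensions_regular:
  assumes "regular k" "e \<in> D" shows "card (nb_extensions m e) = (k - 1) ^ m"
  using assms(2)
proof (induction m arbitrary: e)
  case (Suc m)
  have "card (nb_extensions (Suc m) e) = (\<Sum>f\<in>successors e. card (nb_extensions m f))"
    using card_nb_extensions_Suc Suc.prems .
  also have "\<dots> = card (successors e) * (k - 1) ^ m"
    using Suc.IH by (simp add: successors_def)
  also have "\<dots> = (k - 1) * (k - 1) ^ m"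
    using card_successors assms(1) Suc.prems org_in_V rv_in_D by (simp add: regular_def)
  finally show ?case by simp
next
  case 0
  then show ?case by (simp add: nb_extensions_0)
qed

definition short_nb_extensions :: "nat \<Rightarrow> 'd \<Rightarrow> 'd list set" where
  "short_nb_extensions m e = {p. length p < m \<and> nb_walk (e # p)}"

lemma finite_short_nb_extensions: "finite (short_nb_extensions m e)"
proof (rule finite_subset)
  show "short_nb_extensions m e \<subseteq> {p. set p \<subseteq> D \<and> length p \<le> m}"
    unfolding short_nb_extensions_def using nb_walk_subset by (fastforce simp: nb_walk_Cons)
qed (rule finite_lists_length_le[OF finite_D])

lemma card_short_nb_extensions_regular:
  assumes "regular k" "e \<in> D" shows "card (short_nb_extensions m e) = (\<Sum>j<m. (k - 1) ^ j)"
proof (induction m)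
  case (Suc m)
  have "short_nb_extensions (Suc m) e = short_nb_extensions m e \<union> nb_extensions m e"
    "short_nb_extensions m e \<inter> nb_extensions m e = {}"
    unfolding short_nb_extensions_def nb_extensions_def by auto
  moreover note finite_short_nb_extensions
  ultimately show ?case
    using Suc card_nb_extensions_regular[OF assms] finite_nb_extensions
      by (simp add: card_Un_disjoint)
qed (simp add: short_nb_extensions_def)

lemma tgt_last_in_V: "nb_walk p \<Longrightarrow> p \<noteq> [] \<Longrightarrow> tgt (last p) \<in> V"
  using nb_walk_subset rv_in_D org_in_V by (auto simp: subset_iff)

lemma walk_end_in_V: "nb_walk p \<Longrightarrow> x \<in> V \<Longrightarrow> walk_end x p \<in> V"
  unfolding walk_end_def using nb_walk_subset rv_in_D org_in_V by (auto simp: subset_iff)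

lemma is_walk_end_in_closed_set:
  assumes closed: "\<And>f. f \<in> D \<Longrightarrow> org f \<in> X \<Longrightarrow> tgt f \<in> X"
  shows "is_walk D rv org ws \<Longrightarrow> ws \<noteq> [] \<Longrightarrow> org (hd ws) \<in> X \<Longrightarrow> tgt (last ws) \<in> X"
proof (induction ws)
  case (Cons e ws)
  then have "tgt e \<in> X" using closed is_walk_Cons by auto
  then show ?case using Cons.IH Cons.prems by (cases "ws = []") (auto simp: is_walk_Cons)
qed simp

lemma closed_set_eq_V:
  assumes "graph_connected V D rv org" "X \<subseteq> V" "x \<in> X"
    and "\<And>f. f \<in> D \<Longrightarrow> org f \<in> X \<Longrightarrow> tgt f \<in> X"
  shows "X = V"
proof
  show "V \<subseteq> X"
  proof
    fix u assume "u \<in> V"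
    show "u \<in> X"
    proof (cases "x = u")
      case False
      then obtain ws where "ws \<noteq> []" "is_walk D rv org ws" "org (hd ws) = x" "tgt (last ws) = u"
        using assms(1-3) \<open>u \<in> V\<close> unfolding graph_connected_def trm_def by blast
      then show ?thesis using is_walk_end_in_closed_set[OF assms(4)] assms(3) by blast
    qed (use assms(3) in simp)
  qed
qed (rule assms(2))

definition nb_ball :: "nat \<Rightarrow> 'v \<Rightarrow> 'd list set" where
  "nb_ball r v = {p. nb_walk p \<and> (p \<noteq> [] \<longrightarrow> org (hd p) = v) \<and> length p \<le> r}"

lemma nb_ball_path: "p \<in> nb_ball r v \<Longrightarrow> nb_path v p (walk_end v p)"
  unfolding nb_ball_def nb_path_def by auto

lemma nb_ball_butlast:
  assumes "q \<in> nb_ball r v" "q \<noteq> []"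
  shows "butlast q \<in> nb_ball r v" "walk_end v (butlast q) = org (last q)"
proof -
  obtain q' e where q: "q = q' @ [e]" using assms(2) by (metis append_butlast_last_id)
  then have "nb_path v q' (org e)" using nb_ball_path[OF assms(1)] nb_path_butlast by simp
  then show "butlast q \<in> nb_ball r v" "walk_end v (butlast q) = org (last q)"
    using assms(1) q unfolding nb_ball_def nb_path_def by auto
qed

lemma card_nb_ball:
  assumes "regular k" "v \<in> V"
  shows "card (nb_ball r v) = 1 + k * (\<Sum>j<r. (k - 1) ^ j)"
proof -
  let ?Dv = "{e\<in>D. org e = v}"
  have "nb_ball r v = insert [] (\<Union>e\<in>?Dv. Cons e ` short_nb_extensions r e)"
  proof
    show "nb_ball r v \<subseteq> insert [] (\<Union>e\<in>?Dv. Cons e ` short_nb_extensions r e)"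
    proof
      fix p assume "p \<in> nb_ball r v"
      then show "p \<in> insert [] (\<Union>e\<in>?Dv. Cons e ` short_nb_extensions r e)"
        unfolding nb_ball_def short_nb_extensions_def by (cases p) (auto simp: nb_walk_Cons)
    qed
  qed (auto simp: nb_ball_def short_nb_extensions_def)
  moreover have "card (\<Union>e\<in>?Dv. Cons e ` short_nb_extensions r e) = k * (\<Sum>j<r. (k - 1) ^ j)"
  proof -
    have "card (\<Union>e\<in>?Dv. Cons e ` short_nb_extensions r e)
        = (\<Sum>e\<in>?Dv. card (Cons e ` short_nb_extensions r e))"
      by (rule card_UN_disjoint) (auto simp: finite_D finite_short_nb_extensions)
    also have "\<dots> = (\<Sum>e\<in>?Dv. \<Sum>j<r. (k - 1) ^ j)"
      using card_short_nb_extensions_regular[OF assms(1)]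
        by (intro sum.cong) (auto simp: card_image)
    finally show ?thesis using assms unfolding regular_def degree_def by simp
  qed
  moreover have "finite (\<Union>e\<in>?Dv. Cons e ` short_nb_extensions r e)"
    using finite_D finite_short_nb_extensions by auto
  moreover have "[] \<notin> (\<Union>e\<in>?Dv. Cons e ` short_nb_extensions r e)" by blast
  ultimately show ?thesis by (simp add: card_insert_if)
qed

lemma inj_on_walk_end_nb_ball:
  assumes "odd gir" shows "inj_on (walk_end v) (nb_ball rad v)"
proof (rule inj_onI, rule ccontr)
  fix p q assume p: "p \<in> nb_ball rad v" and q: "q \<in> nb_ball rad v"
    and "walk_end v p = walk_end v q" "p \<noteq> q"
  then have "gir \<le> length p + length q" using girth_le_two_paths nb_ball_path by metis
  moreover have "length p + length q \<le> rad + rad" using p q unfolding nb_ball_def by simp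
  moreover have "rad + rad < gir" using odd_two_times_div_two_succ[OF assms] by linarith
  ultimately show False by linarith
qed

text \<open>The ball of radius \<open>r - 1/2\<close> around the midpoint of the edge \<open>{e, rv e}\<close>.\<close>

definition nb_edge_ball :: "nat \<Rightarrow> 'd \<Rightarrow> 'd list set" where
  "nb_edge_ball r e = {p. nb_walk p \<and> p \<noteq> [] \<and> hd p \<in> {e, rv e} \<and> length p \<le> r}"

lemma card_nb_edge_ball:
  assumes "regular k" "e \<in> D"
  shows "card (nb_edge_ball r e) = 2 * (\<Sum>j<r. (k - 1) ^ j)"
proof -
  have "nb_edge_ball r e
      = Cons e ` short_nb_extensions r e \<union> Cons (rv e) ` short_nb_extensions r (rv e)"
    unfolding nb_edge_ball_def short_nb_extensions_def by (auto simp: neq_Nil_conv)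
  moreover have "Cons e ` short_nb_extensions r e \<inter> Cons (rv e) ` short_nb_extensions r (rv e) = {}"
    using rv_neq[OF assms(2)] by auto
  ultimately have "card (nb_edge_ball r e)
      = card (short_nb_extensions r e) + card (short_nb_extensions r (rv e))"
    using finite_short_nb_extensions by (simp add: card_Un_disjoint card_image)
  then show ?thesis using card_short_nb_extensions_regular[OF assms(1)] assms(2) rv_in_D by simp
qed

lemma nb_edge_ball_backtrack:
  assumes "q \<in> nb_edge_ball r e" "e \<in> D"
  shows "\<exists>q'\<in>nb_edge_ball r e. tgt (last q') = org (last q)"
proof -
  have "q \<noteq> []" using assms(1) unfolding nb_edge_ball_def by simp
  then obtain q' b where qb: "q = q' @ [b]" by (metis append_butlast_last_id)
  have nb: "nb_walk (q' @ [b])" using assms(1) qb unfolding nb_edge_ball_def by simp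
  have "b \<in> D" using nb_walk_subset[OF nb] by simp
  show ?thesis
  proof (cases "q' = []")
    case False
    then have "q' \<in> nb_edge_ball r e" "tgt (last q') = org b"
      using assms(1) qb nb unfolding nb_edge_ball_def by (auto simp: nb_walk_append)
    then show ?thesis using qb by auto
  next
    case True
    then have "[rv b] \<in> nb_edge_ball r e"
      using assms qb \<open>b \<in> D\<close> rv_in_D rv_rv unfolding nb_edge_ball_def by auto
    moreover have "tgt (last [rv b]) = org (last q)" using qb \<open>b \<in> D\<close> rv_rv by simp
    ultimately show ?thesis by blast
  qed
qed

lemma inj_on_tgt_last_nb_edge_ball:
  assumes "even gir" "e \<in> D" shows "inj_on (\<lambda>p. tgt (last p)) (nb_edge_ball rad e)"
proof (rule inj_onI)
  fix p q assume p: "p \<in> nb_edge_ball rad e" and q: "q \<in> nb_edge_ball rad e"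
    and ends: "tgt (last p) = tgt (last q)"
  obtain a p' b q' where pq: "p = a # p'" "q = b # q'"
    using p q unfolding nb_edge_ball_def by (cases p; cases q) auto
  have lengths: "length p' + length (b # q') < gir"
    using p q pq even_two_times_div_two[OF assms(1)] unfolding nb_edge_ball_def by auto
  have path_p: "nb_path (tgt a) p' (tgt (last p))" using p pq nb_path_tl
    unfolding nb_edge_ball_def by auto
  have "a \<in> D" "b \<in> D" using p q pq unfolding nb_edge_ball_def by (auto simp: nb_walk_Cons)
  have path_q: "nb_path (org b) (b # q') (tgt (last p))"
    using q pq ends nb_path_Cons unfolding nb_edge_ball_def by auto
  show "p = q"
  proof (cases "a = b")
    case True
    then have "nb_path (tgt a) q' (tgt (last p))" using q pq ends nb_path_tl
      unfolding nb_edge_ball_def by auto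
    then have "p' = q'" by (rule nb_paths_eq[OF path_p]) (use lengths in simp)
    then show ?thesis using pq True by simp
  next
    case False
    then have "b = rv a" using p q pq assms(2) rv_rv unfolding nb_edge_ball_def by auto
    then have "nb_path (tgt a) (b # q') (tgt (last p))" using path_q \<open>a \<in> D\<close> rv_rv by simp
    then have "p' = b # q'" by (rule nb_paths_eq[OF path_p]) (use lengths in simp)
    then show ?thesis using p pq \<open>b = rv a\<close> unfolding nb_edge_ball_def by (simp add: nb_walk_Cons)
  qed
qed

lemma max_degree_regular:
  assumes "\<forall>v\<in>V. degree D org v = k" "V \<noteq> {}" shows "dmax = k"
proof -
  have "degree D org ` V = {k}" using assms by auto
  then show ?thesis unfolding max_degree_def by simp
qed

lemma card_D_eq_iff_regular: "card D = card V * dmax \<longleftrightarrow> regular dmax"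
  unfolding card_D_eq_sum_degree regular_def
  using sum_eq_card_mult_iff[OF finite_V degree_le_max_degree] by simp

end

section \<open>The bound and its equality case\<close>

locale girth_graph = serre_graph V D rv org
  for V :: "'v set" and D :: "'d set" and rv :: "'d \<Rightarrow> 'd" and org :: "'d \<Rightarrow> 'v" +
  assumes closed_geodesic_exists: "\<exists>w. closed_geodesic D rv org w"
begin

lemma girth_attained: "\<exists>w. closed_geodesic D rv org w \<and> length w = gir"
proof -
  have "\<exists>n w. closed_geodesic D rv org w \<and> length w = n" using closed_geodesic_exists by blast
  then show ?thesis unfolding girth_def by (rule LeastI_ex)
qed

lemma girth_pos: "0 < gir"
  using girth_attained shortest_geodesic_darts unfolding shortest_geodesics_def by fastforce

lemma D_nonempty: "D \<noteq> {}"
proof -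
  obtain w where "w \<in> shortest_geodesics"
    using girth_attained unfolding shortest_geodesics_def by blast
  then show ?thesis using shortest_geodesic_darts by (metis set_empty subset_empty)
qed

lemma V_nonempty: "V \<noteq> {}"
  using D_nonempty org_in_V by blast

lemma max_degree_ge_2: "2 \<le> dmax"
proof -
  obtain w where w: "closed_geodesic D rv org w" using closed_geodesic_exists by blast
  then have "w \<noteq> []" "nb_walk w" "org (hd w) = tgt (last w)" "hd w \<noteq> rv (last w)"
    unfolding closed_geodesic_iff closed_nb_walk_def by auto
  moreover have "hd w \<in> D" "last w \<in> D"
    using calculation(1,2) by (meson hd_in_set last_in_set nb_walk_subset subsetD)+
  ultimately have "{hd w, rv (last w)} \<subseteq> {e\<in>D. org e = tgt (last w)}" "card {hd w, rv (last w)} = 2"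
    using rv_in_D by auto
  moreover have "card {hd w, rv (last w)} \<le> card {e\<in>D. org e = tgt (last w)}"
    using calculation(1) finite_D by (intro card_mono) auto
  ultimately have "2 \<le> degree D org (tgt (last w))" unfolding degree_def by simp
  also have "\<dots> \<le> dmax" using degree_le_max_degree org_in_V rv_in_D \<open>last w \<in> D\<close> by blast
  finally show ?thesis .
qed

definition geodesics_from :: "'d \<Rightarrow> 'd list set" where
  "geodesics_from e = {w \<in> shortest_geodesics. hd w = e}"

lemma card_shortest_geodesics_eq_sum: "card shortest_geodesics = (\<Sum>e\<in>D. card (geodesics_from e))"
proof -
  have "shortest_geodesics = (\<Union>e\<in>D. geodesics_from e)"
    unfolding geodesics_from_def using shortest_geodesic_darts by (auto simp: hd_in_set subset_iff)
  moreover have "card (\<Union>e\<in>D. geodesics_from e) = (\<Sum>e\<in>D. card (geodesics_from e))"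
    by (rule card_UN_disjoint)
      (use finite_D finite_shortest_geodesics in \<open>auto simp: geodesics_from_def\<close>)
  ultimately show ?thesis by simp
qed

lemma two_tails_lt_girth: "(gir - Suc rad) + (gir - Suc rad) < gir"
  using girth_pos by presburger

definition front_half :: "'d list \<Rightarrow> 'd list" where
  "front_half w = take rad (tl w)"

lemma geodesics_from_split:
  assumes "w \<in> geodesics_from e"
  shows "w = (e # front_half w) @ drop (Suc rad) w" and "nb_walk (e # front_half w)"
    and "length (front_half w) = rad" and "length (drop (Suc rad) w) = gir - Suc rad"
    and "nb_path (tgt (last (e # front_half w))) (drop (Suc rad) w) (org e)"
proof -
  have cg: "closed_geodesic D rv org w" and len: "length w = gir" and "hd w = e"
    using assms unfolding geodesics_from_def shortest_geodesics_def by auto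
  moreover have "w \<noteq> []" using assms shortest_geodesic_darts unfolding geodesics_from_def by blast
  ultimately have "take (Suc rad) w = e # front_half w"
    unfolding front_half_def by (cases w) auto
  then show split: "w = (e # front_half w) @ drop (Suc rad) w" by (metis append_take_drop_id)
  have "closed_nb_walk w" using cg closed_geodesic_iff by blast
  then have "nb_walk ((e # front_half w) @ drop (Suc rad) w)"
    and closes: "org (hd ((e # front_half w) @ drop (Suc rad) w))
      = tgt (last ((e # front_half w) @ drop (Suc rad) w))"
    unfolding closed_nb_walk_def using split by auto
  then show "nb_walk (e # front_half w)"
    and "nb_path (tgt (last (e # front_half w))) (drop (Suc rad) w) (org e)"
    unfolding nb_walk_append nb_path_def walk_end_def by auto
  show "length (front_half w) = rad" "length (drop (Suc rad) w) = gir - Suc rad"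
    using len girth_pos unfolding front_half_def by auto
qed

lemma front_half_in_nb_extensions: "w \<in> geodesics_from e \<Longrightarrow> front_half w \<in> nb_extensions rad e"
  using geodesics_from_split(2,3) unfolding nb_extensions_def by blast

lemma inj_on_front_half: "inj_on front_half (geodesics_from e)"
proof (rule inj_onI)
  fix w w' assume w: "w \<in> geodesics_from e" and w': "w' \<in> geodesics_from e"
    and eq: "front_half w = front_half w'"
  have "drop (Suc rad) w = drop (Suc rad) w'"
  proof (rule ccontr)
    assume "drop (Suc rad) w \<noteq> drop (Suc rad) w'"
    then have "gir \<le> length (drop (Suc rad) w) + length (drop (Suc rad) w')"
      using girth_le_two_paths geodesics_from_split(5)[OF w] geodesics_from_split(5)[OF w'] eq
      by metis
    then show False
      using geodesics_from_split(4)[OF w] geodesics_from_split(4)[OF w'] two_tails_lt_girth by simp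
  qed
  then show "w = w'" using geodesics_from_split(1)[OF w] geodesics_from_split(1)[OF w'] eq by metis
qed

lemma card_geodesics_from_le: "card (geodesics_from e) \<le> card (nb_extensions rad e)"
  using card_inj_on_le[OF inj_on_front_half _ finite_nb_extensions] front_half_in_nb_extensions
  by blast

lemma girth_mult_kiss_le: "gir * kiss D rv org \<le> card V * dmax * (dmax - 1) ^ rad"
proof -
  have "gir * kiss D rv org = (\<Sum>e\<in>D. card (geodesics_from e))"
    using girth_mult_kiss card_shortest_geodesics_eq_sum by simp
  also have "\<dots> \<le> (\<Sum>e\<in>D. (dmax - 1) ^ rad)"
    using card_geodesics_from_le card_nb_extensions_le[OF degree_le_max_degree[THEN ballI]]
    by (intro sum_mono) (meson le_trans)
  also have "\<dots> \<le> card V * dmax * (dmax - 1) ^ rad" using card_D_le by simp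
  finally show ?thesis .
qed

definition extensions_close :: "'d \<Rightarrow> bool" where
  "extensions_close e \<longleftrightarrow> front_half ` geodesics_from e = nb_extensions rad e"

lemma extensions_close_iff_card:
  assumes "regular k" "e \<in> D"
  shows "extensions_close e \<longleftrightarrow> card (geodesics_from e) = (k - 1) ^ rad"
proof -
  have "card (front_half ` geodesics_from e) = card (geodesics_from e)"
    using inj_on_front_half by (rule card_image)
  moreover have "front_half ` geodesics_from e \<subseteq> nb_extensions rad e"
    using front_half_in_nb_extensions by blast
  ultimately show ?thesis unfolding extensions_close_def
    using card_nb_extensions_regular[OF assms] finite_nb_extensions card_subset_eq by metis
qed

lemma girth_mult_kiss_eq_iff:
  "gir * kiss D rv org = card V * dmax * (dmax - 1) ^ rad \<longleftrightarrow>
     regular dmax \<and> (\<forall>e\<in>D. extensions_close e)"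
proof -
  let ?X = "(dmax - 1) ^ rad"
  have "?X > 0" using max_degree_ge_2 by simp
  have sum: "gir * kiss D rv org = (\<Sum>e\<in>D. card (geodesics_from e))"
    using girth_mult_kiss card_shortest_geodesics_eq_sum by simp
  have le: "card (geodesics_from e) \<le> ?X" if "e \<in> D" for e
    using card_geodesics_from_le card_nb_extensions_le[OF degree_le_max_degree[THEN ballI] that]
    by (meson le_trans)
  then have "(\<Sum>e\<in>D. card (geodesics_from e)) \<le> card D * ?X"
    using sum_bounded_above[of D "\<lambda>e. card (geodesics_from e)"] by simp
  moreover have "card D * ?X \<le> card V * dmax * ?X" using card_D_le by simp
  ultimately have "gir * kiss D rv org = card V * dmax * ?X \<longleftrightarrow>
      (\<Sum>e\<in>D. card (geodesics_from e)) = card D * ?X \<and> card D * ?X = card V * dmax * ?X"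
    unfolding sum by linarith
  also have "\<dots> \<longleftrightarrow> (\<forall>e\<in>D. card (geodesics_from e) = ?X) \<and> regular dmax"
    using sum_eq_card_mult_iff[of D "\<lambda>e. card (geodesics_from e)", OF finite_D le]
      card_D_eq_iff_regular \<open>?X > 0\<close> max_degree_ge_2 by simp
  also have "\<dots> \<longleftrightarrow> regular dmax \<and> (\<forall>e\<in>D. extensions_close e)"
    using extensions_close_iff_card by blast
  finally show ?thesis .
qed

lemma return_path:
  assumes "\<forall>e\<in>D. extensions_close e" "nb_walk w" "length w = Suc rad"
  shows "\<exists>s. nb_path (org (hd w)) s (tgt (last w)) \<and> length s = gir - Suc rad \<and>
    (s \<noteq> [] \<longrightarrow> hd s \<noteq> hd w)"
proof -
  obtain e p where w: "w = e # p" and "length p = rad" using assms(3) by (cases w) auto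
  then have "e \<in> D" "p \<in> nb_extensions rad e"
    using assms(2) unfolding nb_extensions_def by (auto simp: nb_walk_Cons)
  then obtain c where c: "c \<in> geodesics_from e" and p: "p = front_half c"
    using assms(1) unfolding extensions_close_def by blast
  let ?t = "drop (Suc rad) c"
  have "nb_path (org e) (rev (map rv ?t)) (tgt (last w))"
    using nb_path_reverse geodesics_from_split(5)[OF c] p w by simp
  moreover have "hd c \<noteq> rv (last c)" "hd c = e"
    using c unfolding geodesics_from_def shortest_geodesics_def closed_geodesic_iff by auto
  then have "?t \<noteq> [] \<longrightarrow> hd (rev (map rv ?t)) \<noteq> e"
    using geodesics_from_split(1)[OF c] by (metis hd_rev last_appendR last_map)
  ultimately show ?thesis using geodesics_from_split(4)[OF c] w
    by (intro exI[of _ "rev (map rv ?t)"]) auto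
qed

lemma extensions_closeI:
  assumes "\<And>p. p \<in> nb_extensions rad e \<Longrightarrow>
    \<exists>s. nb_path (org e) s (tgt (last (e # p))) \<and> s \<noteq> e # p \<and> length s + Suc rad = gir"
  shows "extensions_close e"
  unfolding extensions_close_def
proof
  show "front_half ` geodesics_from e \<subseteq> nb_extensions rad e" using front_half_in_nb_extensions
    by auto
  show "nb_extensions rad e \<subseteq> front_half ` geodesics_from e"
  proof
    fix p assume p: "p \<in> nb_extensions rad e"
    then obtain s where s: "nb_path (org e) s (tgt (last (e # p)))" "s \<noteq> e # p"
      "length s + Suc rad = gir"
      using assms by blast
    have "nb_walk (e # p)" "length p = rad" using p unfolding nb_extensions_def by auto
    then have "(e # p) @ rev (map rv s) \<in> geodesics_from e"
      using closed_geodesic_join[OF nb_path_Cons s(1)] s(2,3)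
      unfolding geodesics_from_def shortest_geodesics_def by auto
    moreover have "front_half ((e # p) @ rev (map rv s)) = p"
      unfolding front_half_def using \<open>length p = rad\<close> by simp
    ultimately show "p \<in> front_half ` geodesics_from e" by force
  qed
qed

lemma extensions_close_if_nb_ball_cover:
  assumes "odd gir" "walk_end (org e) ` nb_ball rad (org e) = V" "e \<in> D"
  shows "extensions_close e"
proof (rule extensions_closeI)
  fix p assume "p \<in> nb_extensions rad e"
  then have nb: "nb_walk (e # p)" and len: "length p = rad" unfolding nb_extensions_def by auto
  let ?u = "tgt (last (e # p))"
  have "?u \<in> V" using walk_end_in_V[OF nb org_in_V[OF assms(3)]] unfolding walk_end_def by simp
  then obtain q where q: "q \<in> nb_ball rad (org e)" "walk_end (org e) q = ?u"
    using assms(2) by (metis imageE)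
  then have path: "nb_path (org e) q ?u" using nb_ball_path by metis
  have "length q \<le> rad" using q unfolding nb_ball_def by simp
  then have "q \<noteq> e # p" using len by auto
  then have "gir \<le> length (e # p) + length q"
    using girth_le_two_paths[OF nb_path_Cons[OF nb] path] by simp
  then have "length q + Suc rad = gir"
    using len \<open>length q \<le> rad\<close> odd_two_times_div_two_succ[OF assms(1)] by simp
  then show "\<exists>s. nb_path (org e) s ?u \<and> s \<noteq> e # p \<and> length s + Suc rad = gir"
    using path \<open>q \<noteq> e # p\<close> by blast
qed

lemma extensions_close_if_nb_edge_ball_cover:
  assumes "even gir" "(\<lambda>p. tgt (last p)) ` nb_edge_ball rad e = V" "e \<in> D"
  shows "extensions_close e"
proof (rule extensions_closeI)
  fix p assume "p \<in> nb_extensions rad e"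
  then have nb: "nb_walk (e # p)" and len: "length p = rad" unfolding nb_extensions_def by auto
  let ?u = "tgt (last (e # p))"
  have "?u \<in> V" using walk_end_in_V[OF nb org_in_V[OF assms(3)]] unfolding walk_end_def by simp
  then have "?u \<in> (\<lambda>p. tgt (last p)) ` nb_edge_ball rad e" using assms(2) by simp
  then obtain r where r: "r \<in> nb_edge_ball rad e" "tgt (last r) = ?u" by auto
  then obtain b q where q: "b # q \<in> nb_edge_ball rad e" "tgt (last (b # q)) = ?u"
    unfolding nb_edge_ball_def by (cases r) auto
  have len_q: "Suc (length q) \<le> rad" and "b \<in> {e, rv e}" and nb_q: "nb_walk (b # q)"
    using q(1) unfolding nb_edge_ball_def by auto
  have "b \<noteq> e"
  proof
    assume "b = e"
    then have "nb_path (tgt e) q ?u" using nb_path_tl[OF nb_q] q(2) by simp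
    then have "p = q" by (rule nb_paths_eq[OF nb_path_tl[OF nb]])
      (use len len_q even_two_times_div_two[OF assms(1)] in simp)
    then show False using len len_q by simp
  qed
  then have "b = rv e" using \<open>b \<in> {e, rv e}\<close> by simp
  then have path: "nb_path (org e) q ?u" using nb_path_tl[OF nb_q] q(2) rv_rv[OF assms(3)] by simp
  have "q \<noteq> e # p" using len len_q by auto
  then have "gir \<le> length (e # p) + length q"
    using girth_le_two_paths[OF nb_path_Cons[OF nb] path] by simp
  then have "length q + Suc rad = gir" using len len_q even_two_times_div_two[OF assms(1)] by simp
  then show "\<exists>s. nb_path (org e) s ?u \<and> s \<noteq> e # p \<and> length s + Suc rad = gir"
    using path \<open>q \<noteq> e # p\<close> by blast
qed

lemma nb_ball_extend:
  assumes "odd gir" "\<forall>e\<in>D. extensions_close e" "q \<in> nb_ball rad v" "nb_path v (q @ [f]) (tgt f)"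
  shows "\<exists>q'\<in>nb_ball rad v. walk_end v q' = tgt f"
proof (cases "length q < rad")
  case True
  then have "q @ [f] \<in> nb_ball rad v" using assms(4) unfolding nb_ball_def nb_path_def by auto
  then show ?thesis using assms(4) unfolding nb_path_def by blast
next
  case False
  then have "nb_walk (q @ [f])" "length (q @ [f]) = Suc rad" "org (hd (q @ [f])) = v"
    using assms(3,4) unfolding nb_ball_def nb_path_def by auto
  then obtain s where "nb_path v s (tgt f)" "length s = gir - Suc rad"
    using return_path[OF assms(2)] by fastforce
  then have "s \<in> nb_ball rad v" "walk_end v s = tgt f"
    using odd_two_times_div_two_succ[OF assms(1)] unfolding nb_ball_def nb_path_def by auto
  then show ?thesis by blast
qed

lemma nb_edge_ball_extend:
  assumes "even gir" "\<forall>e\<in>D. extensions_close e" "q \<in> nb_edge_ball rad e" "e \<in> D"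
    and "nb_walk (q @ [f])"
  shows "\<exists>q'\<in>nb_edge_ball rad e. tgt (last q') = tgt f"
proof (cases "length q < rad")
  case True
  then have "q @ [f] \<in> nb_edge_ball rad e" using assms(3,5) unfolding nb_edge_ball_def by auto
  then show ?thesis by force
next
  case False
  let ?h = "hd q"
  have "q \<noteq> []" "?h \<in> {e, rv e}" using assms(3) unfolding nb_edge_ball_def by auto
  then have "?h \<in> D" "length (q @ [f]) = Suc rad" "hd (q @ [f]) = ?h"
    using assms(3,5) False nb_walk_subset hd_in_set unfolding nb_edge_ball_def by auto
  then obtain s where s: "nb_path (org ?h) s (tgt f)" "length s = gir - Suc rad"
    "s \<noteq> [] \<longrightarrow> hd s \<noteq> ?h"
    using return_path[OF assms(2,5)] by fastforce
  then have "nb_path (org (rv ?h)) (rv ?h # s) (tgt f)"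
    using \<open>?h \<in> D\<close> by (intro nb_path_ConsI) (auto simp: rv_rv rv_in_D)
  moreover have "rv ?h \<in> {e, rv e}" using \<open>?h \<in> {e, rv e}\<close> assms(4) rv_rv by auto
  moreover have "Suc (gir - Suc rad) \<le> rad" using even_two_times_div_two[OF assms(1)] girth_pos
    by simp
  ultimately have "rv ?h # s \<in> nb_edge_ball rad e" "tgt f = tgt (last (rv ?h # s))"
    using s(2) unfolding nb_edge_ball_def nb_path_def walk_end_def by (auto split: if_splits)
  then show ?thesis by (intro bexI[of _ "rv ?h # s"]) simp_all
qed

end

locale connected_girth_graph = girth_graph +
  assumes connected: "graph_connected V D rv org"
begin

lemma nb_ball_cover_if_extensions_close:
  assumes "odd gir" "\<forall>e\<in>D. extensions_close e" "v \<in> V"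
  shows "walk_end v ` nb_ball rad v = V"
proof (rule closed_set_eq_V[OF connected])
  show "walk_end v ` nb_ball rad v \<subseteq> V" using walk_end_in_V assms(3) unfolding nb_ball_def by auto
  show "v \<in> walk_end v ` nb_ball rad v"
    by (rule image_eqI[of _ _ "[]"]) (auto simp: nb_ball_def walk_end_def)
  fix f assume f: "f \<in> D" "org f \<in> walk_end v ` nb_ball rad v"
  then obtain q where q: "q \<in> nb_ball rad v" and "org f = walk_end v q" by auto
  then have path: "nb_path v q (org f)" using nb_ball_path by simp
  show "tgt f \<in> walk_end v ` nb_ball rad v"
  proof (cases "q \<noteq> [] \<and> f = rv (last q)")
    case True
    have "last q \<in> D" using q True nb_walk_subset last_in_set unfolding nb_ball_def by blast
    then have "tgt f = walk_end v (butlast q)" using nb_ball_butlast(2)[OF q] True rv_rv by simp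
    then show ?thesis using nb_ball_butlast(1)[OF q] True by blast
  next
    case False
    then have "nb_path v (q @ [f]) (tgt f)" using nb_path_snoc[OF path f(1)] by blast
    then obtain q' where "q' \<in> nb_ball rad v" "walk_end v q' = tgt f"
      using nb_ball_extend[OF assms(1,2) q] by blast
    then show ?thesis by (intro rev_image_eqI[of q']) simp_all
  qed
qed

lemma nb_edge_ball_cover_if_extensions_close:
  assumes "even gir" "\<forall>e\<in>D. extensions_close e" "e \<in> D"
  shows "(\<lambda>p. tgt (last p)) ` nb_edge_ball rad e = V"
proof (rule closed_set_eq_V[OF connected])
  let ?B = "(\<lambda>p. tgt (last p)) ` nb_edge_ball rad e"
  show "?B \<subseteq> V" using tgt_last_in_V unfolding nb_edge_ball_def by auto
  have "0 < rad" using even_two_times_div_two[OF assms(1)] girth_pos by auto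
  then show "tgt e \<in> ?B" using assms(3)
    by (intro image_eqI[of _ _ "[e]"]) (auto simp: nb_edge_ball_def)
  fix f assume f: "f \<in> D" "org f \<in> ?B"
  then obtain q where q: "q \<in> nb_edge_ball rad e" and "org f = tgt (last q)" by auto
  then have path: "nb_path (org (hd q)) q (org f)"
    unfolding nb_edge_ball_def nb_path_def walk_end_def by auto
  show "tgt f \<in> ?B"
  proof (cases "f = rv (last q)")
    case True
    have "last q \<in> D" using q nb_walk_subset last_in_set unfolding nb_edge_ball_def by blast
    then have "tgt f = org (last q)" using True rv_rv by simp
    moreover obtain q' where "q' \<in> nb_edge_ball rad e" "tgt (last q') = org (last q)"
      using nb_edge_ball_backtrack[OF q assms(3)] by blast
    ultimately show ?thesis by (intro rev_image_eqI[of q']) simp_all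
  next
    case False
    then have "nb_walk (q @ [f])" using nb_path_snoc[OF path f(1)] unfolding nb_path_def by blast
    then obtain q' where "q' \<in> nb_edge_ball rad e" "tgt (last q') = tgt f"
      using nb_edge_ball_extend[OF assms(1,2) q assms(3)] by blast
    then show ?thesis by (intro rev_image_eqI[of q']) simp_all
  qed
qed

lemma extensions_close_iff_moore_odd:
  assumes "odd gir" "regular dmax"
  shows "(\<forall>e\<in>D. extensions_close e) \<longleftrightarrow> card V = moore_bound dmax gir"
proof -
  have "(gir - 1) div 2 = rad" using assms(1) by (auto elim: oddE)
  then have card_ball: "card (walk_end v ` nb_ball rad v) = moore_bound dmax gir" if "v \<in> V" for v
    using card_image[OF inj_on_walk_end_nb_ball[OF assms(1)]] card_nb_ball[OF assms(2) that]
      assms(1) unfolding moore_bound_def by simp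
  have ball_V: "walk_end v ` nb_ball rad v \<subseteq> V" if "v \<in> V" for v
    using walk_end_in_V that unfolding nb_ball_def by auto
  show ?thesis
  proof
    assume close: "\<forall>e\<in>D. extensions_close e"
    obtain v where "v \<in> V" using V_nonempty by blast
    then show "card V = moore_bound dmax gir"
      using nb_ball_cover_if_extensions_close[OF assms(1) close] card_ball by simp
  next
    assume card_V: "card V = moore_bound dmax gir"
    have "walk_end (org e) ` nb_ball rad (org e) = V" if "e \<in> D" for e
      using card_subset_eq[OF finite_V ball_V] card_ball card_V org_in_V[OF that] by simp
    then show "\<forall>e\<in>D. extensions_close e" using extensions_close_if_nb_ball_cover[OF assms(1)]
      by blast
  qed
qed

lemma extensions_close_iff_moore_even:
  assumes "even gir" "regular dmax"
  shows "(\<forall>e\<in>D. extensions_close e) \<longleftrightarrow> card V = moore_bound dmax gir"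
proof -
  have card_ball: "card ((\<lambda>p. tgt (last p)) ` nb_edge_ball rad e) = moore_bound dmax gir"
    if "e \<in> D" for e
    using card_image[OF inj_on_tgt_last_nb_edge_ball[OF assms(1) that]]
      card_nb_edge_ball[OF assms(2) that] assms(1) unfolding moore_bound_def by simp
  have ball_V: "(\<lambda>p. tgt (last p)) ` nb_edge_ball rad e \<subseteq> V" for e
    using tgt_last_in_V unfolding nb_edge_ball_def by auto
  show ?thesis
  proof
    assume close: "\<forall>e\<in>D. extensions_close e"
    obtain e where "e \<in> D" using D_nonempty by blast
    then show "card V = moore_bound dmax gir"
      using nb_edge_ball_cover_if_extensions_close[OF assms(1) close] card_ball by simp
  next
    assume card_V: "card V = moore_bound dmax gir"
    have "(\<lambda>p. tgt (last p)) ` nb_edge_ball rad e = V" if "e \<in> D" for e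
      using card_subset_eq[OF finite_V ball_V] card_ball[OF that] card_V by simp
    then show "\<forall>e\<in>D. extensions_close e" using extensions_close_if_nb_edge_ball_cover[OF assms(1)]
      by blast
  qed
qed

lemma moore_graph_iff: "moore_graph V D rv org \<longleftrightarrow> regular dmax \<and> card V = moore_bound dmax gir"
proof
  assume "moore_graph V D rv org"
  then obtain k where "\<forall>v\<in>V. degree D org v = k" "card V = moore_bound k gir"
    unfolding moore_graph_def by blast
  moreover from this have "dmax = k" using max_degree_regular V_nonempty by blast
  ultimately show "regular dmax \<and> card V = moore_bound dmax gir" unfolding regular_def by simp
qed (use connected in \<open>auto simp: moore_graph_def regular_def\<close>)

theorem girth_mult_kiss_eq_iff_moore:
  "gir * kiss D rv org = card V * dmax * (dmax - 1) ^ rad \<longleftrightarrow> moore_graph V D rv org"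
  using girth_mult_kiss_eq_iff extensions_close_iff_moore_odd extensions_close_iff_moore_even
    moore_graph_iff by blast

end

theorem theorem1p1:
  fixes V :: "'v set" and D :: "'d set" and rv :: "'d \<Rightarrow> 'd" and org :: "'d \<Rightarrow> 'v"
  assumes "multigraph V D rv org"
    and "graph_connected V D rv org"
    and "\<exists>ws. closed_geodesic D rv org ws"
  defines "n \<equiv> card V" and "d \<equiv> max_degree V D org" and "g \<equiv> girth D rv org"
  shows "real (kiss D rv org) \<le> real n * real d * (real d - 1) ^ (g div 2) / real g
         \<and> (real (kiss D rv org) = real n * real d * (real d - 1) ^ (g div 2) / real g
           \<longleftrightarrow> moore_graph V D rv org)"
proof -
  interpret connected_girth_graph V D rv org
    using assms(1-3) by unfold_locales
  have bound: "real (n * d * (d - 1) ^ (g div 2)) = real n * real d * (real d - 1) ^ (g div 2)"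
    using max_degree_ge_2 unfolding d_def by (simp add: of_nat_diff)
  have "0 < real g" using girth_pos unfolding g_def by simp
  then have "real (kiss D rv org) \<le> real n * real d * (real d - 1) ^ (g div 2) / real g
      \<longleftrightarrow> g * kiss D rv org \<le> n * d * (d - 1) ^ (g div 2)"
    and "real (kiss D rv org) = real n * real d * (real d - 1) ^ (g div 2) / real g
      \<longleftrightarrow> g * kiss D rv org = n * d * (d - 1) ^ (g div 2)"
    unfolding bound[symmetric] by (simp_all add: pos_le_divide_eq eq_divide_eq mult.commute
      flip: of_nat_mult)
  then show ?thesis
    using girth_mult_kiss_le girth_mult_kiss_eq_iff_moore unfolding n_def d_def g_def by simp
qed

end
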